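(* Let $f(t)=1+\sum_{i=1}^{d}f_{i-1}t^i$ and $g(t)=1+\sum_{i=1}^{d'}g_{i-1}t^i$ be $f$-polynomials of simplicial complexes. Then (a) the product $f(t)g(t)$ is the $f$-polynomial of a simplicial complex, and (b) the Hadamard product $f(t)\circ g(t)=1+\sum_{i=1}^{\min\{d,d'\}}f_{i-1}g_{i-1}t^i$ is the $f$-polynomial of a simplicial complex.
   Context: The $f$-polynomial of a simplicial complex is $\sum_{i\ge0}f_{i-1}t^i$, where $f_{i-1}$ is the number of faces of cardinality $i$ (constant term $1$ for the empty face). *)

theory Defs
  imports "HOL-Computational_Algebra.Polynomial"
begin

definition simplicial_complex :: "'a set set \<Rightarrow> bool" where
  "simplicial_complex K \<longleftrightarrow> finite K \<and> {} \<in> K \<and> (\<forall>F\<in>K. finite F) \<and>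
     (\<forall>F\<in>K. \<forall>G. G \<subseteq> F \<longrightarrow> G \<in> K)"

text \<open>f-polynomial: sum over faces F of t^|F|, i.e. coefficient of t^i is f_{i-1}.\<close>
definition f_polynomial :: "'a set set \<Rightarrow> int poly" where
  "f_polynomial K = (\<Sum>F\<in>K. monom 1 (card F))"

text \<open>Being the f-polynomial of some simplicial complex (vertices taken in nat;
  every finite complex is isomorphic to one with natural-number vertices).\<close>
definition is_f_polynomial :: "int poly \<Rightarrow> bool" where
  "is_f_polynomial p \<longleftrightarrow> (\<exists>K :: nat set set. simplicial_complex K \<and> f_polynomial K = p)"

definition hadamard_poly :: "int poly \<Rightarrow> int poly \<Rightarrow> int poly" where
  "hadamard_poly p q =
     Poly (map (\<lambda>i. coeff p i * coeff q i) [0..<Suc (max (degree p) (degree q))])"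

end

theory Submission
  imports Defs "HOL-Library.Countable"
begin

text \<open>For the product take the join of the two complexes,
  whose faces are the disjoint unions \<open>A \<uplus> B\<close> of faces \<open>A \<in> K\<close>, \<open>B \<in> L\<close>; since
  \<open>|A \<uplus> B| = |A| + |B|\<close>, its f-polynomial is the product. For the Hadamard product order the
  vertices and take, for every pair of faces \<open>A \<in> K\<close>, \<open>B \<in> L\<close> of equal size, the
  order-preserving matching between \<open>A\<close> and \<open>B\<close> as a face on the product of the vertex
  sets.
  A subset of such a matching is again the order-preserving matching of its two projections, so
  these faces form a complex, and its faces of size \<open>i\<close> correspond bijectively to pairs of
  faces of size \<open>i\<close>.\<close>

lemma simplicial_complex_image:
  assumes "inj h" "simplicial_complex K"
  shows "simplicial_complex ((`) h ` K)"
  unfolding simplicial_complex_def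
proof (intro conjI ballI allI impI)
  show "finite ((`) h ` K)" "{} \<in> (`) h ` K"
    using assms(2) unfolding simplicial_complex_def by force+
  fix F assume "F \<in> (`) h ` K"
  then obtain F0 where F0: "F0 \<in> K" "F = h ` F0" by auto
  then show "finite F" using assms(2) by (simp add: simplicial_complex_def)
  fix G assume "G \<subseteq> F"
  then have "G = h ` (h -` G \<inter> F0)" using F0 by auto
  moreover have "h -` G \<inter> F0 \<in> K" using F0 assms(2) unfolding simplicial_complex_def by blast
  ultimately show "G \<in> (`) h ` K" by blast
qed

lemma f_polynomial_image:
  assumes "inj h"
  shows "f_polynomial ((`) h ` K) = f_polynomial K"
proof -
  have "inj_on ((`) h) K" using assms by (meson inj_image_eq_iff inj_onI)
  then show ?thesis
    unfolding f_polynomial_def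
    by (simp add: sum.reindex card_image assms inj_on_subset[OF assms])
qed

lemma is_f_polynomial_f_polynomial:
  fixes K :: "'a :: countable set set"
  assumes "simplicial_complex K"
  shows "is_f_polynomial (f_polynomial K)"
  unfolding is_f_polynomial_def
  using simplicial_complex_image[OF inj_to_nat assms] f_polynomial_image[OF inj_to_nat] by blast

lemma coeff_f_polynomial:
  assumes "finite K"
  shows "coeff (f_polynomial K) i = int (card {F\<in>K. card F = i})"
proof -
  have "coeff (f_polynomial K) i = (\<Sum>F\<in>K. if card F = i then 1 else 0)"
    unfolding f_polynomial_def by (simp add: coeff_sum coeff_monom)
  also have "\<dots> = int (card {F\<in>K. card F = i})"
    using assms by (simp add: sum.If_cases Int_def)
  finally show ?thesis .
qed

lemma coeff_hadamard_poly: "coeff (hadamard_poly p q) i = coeff p i * coeff q i"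
proof (cases "i \<le> max (degree p) (degree q)")
  case False
  then have "coeff p i = 0" "coeff q i = 0" by (auto intro: coeff_eq_0)
  with False show ?thesis
    unfolding hadamard_poly_def by (simp add: nth_default_def del: upt_Suc)
qed (simp add: hadamard_poly_def nth_default_def del: upt_Suc)

definition disjoint_union :: "'a set \<Rightarrow> 'b set \<Rightarrow> ('a + 'b) set" where
  "disjoint_union A B = Inl ` A \<union> Inr ` B"

definition join :: "'a set set \<Rightarrow> 'b set set \<Rightarrow> ('a + 'b) set set" where
  "join K L = (\<lambda>(A, B). disjoint_union A B) ` (K \<times> L)"

lemma disjoint_union_vimage: "disjoint_union (Inl -` F) (Inr -` F) = F"
proof (rule set_eqI)
  show "x \<in> disjoint_union (Inl -` F) (Inr -` F) \<longleftrightarrow> x \<in> F" for x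
    by (cases x) (auto simp: disjoint_union_def)
qed

lemma inj_disjoint_union: "inj (\<lambda>(A, B). disjoint_union A B)"
  by (rule injI) (auto simp: disjoint_union_def)

lemma card_disjoint_union:
  "finite A \<Longrightarrow> finite B \<Longrightarrow> card (disjoint_union A B) = card A + card B"
  unfolding disjoint_union_def by (subst card_Un_disjoint) (auto simp: card_image)

lemma simplicial_complex_join:
  assumes K: "simplicial_complex K" and L: "simplicial_complex L"
  shows "simplicial_complex (join K L)"
  unfolding simplicial_complex_def
proof (intro conjI ballI allI impI)
  show "finite (join K L)" using K L by (simp add: join_def simplicial_complex_def)
  have "{} \<in> K" "{} \<in> L" using K L by (auto simp: simplicial_complex_def)
  then show "{} \<in> join K L"
    unfolding join_def by (intro rev_image_eqI[of "({}, {})"]) (simp_all add: disjoint_union_def)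
  fix F assume "F \<in> join K L"
  then obtain A B where AB: "A \<in> K" "B \<in> L" "F = disjoint_union A B"
    unfolding join_def by auto
  then show "finite F" using K L by (auto simp: simplicial_complex_def disjoint_union_def)
  fix G assume "G \<subseteq> F"
  then have "Inl -` G \<subseteq> A" "Inr -` G \<subseteq> B" using AB by (auto simp: disjoint_union_def)
  then have "Inl -` G \<in> K" "Inr -` G \<in> L" using AB K L by (auto simp: simplicial_complex_def)
  then show "G \<in> join K L"
    unfolding join_def by (intro rev_image_eqI[of "(Inl -` G, Inr -` G)"]) (simp_all add: disjoint_union_vimage)
qed

lemma f_polynomial_join:
  assumes "simplicial_complex K" "simplicial_complex L"
  shows "f_polynomial (join K L) = f_polynomial K * f_polynomial L"
proof -
  have "f_polynomial (join K L) = (\<Sum>(A, B)\<in>K \<times> L. monom 1 (card (disjoint_union A B)))"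
    unfolding f_polynomial_def join_def
    by (rule sum.reindex_cong[OF inj_on_subset[OF inj_disjoint_union subset_UNIV]]) auto
  also have "\<dots> = (\<Sum>(A, B)\<in>K \<times> L. monom 1 (card A) * monom 1 (card B))"
    using assms
    by (intro sum.cong) (auto simp: simplicial_complex_def card_disjoint_union mult_monom)
  also have "\<dots> = f_polynomial K * f_polynomial L"
    unfolding f_polynomial_def by (simp add: sum_product sum.cartesian_product)
  finally show ?thesis .
qed

definition matching :: "'a :: linorder set \<Rightarrow> 'b :: linorder set \<Rightarrow> ('a \<times> 'b) set" where
  "matching A B = set (zip (sorted_list_of_set A) (sorted_list_of_set B))"

definition hadamard_complex ::
    "'a :: linorder set set \<Rightarrow> 'b :: linorder set set \<Rightarrow> ('a \<times> 'b) set set" where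
  "hadamard_complex K L = {matching A B | A B. A \<in> K \<and> B \<in> L \<and> card A = card B}"

lemma fst_matching: "finite A \<Longrightarrow> card A = card B \<Longrightarrow> fst ` matching A B = A"
  unfolding matching_def by (metis length_sorted_list_of_set map_fst_zip set_map set_sorted_list_of_set)

lemma snd_matching: "finite B \<Longrightarrow> card A = card B \<Longrightarrow> snd ` matching A B = B"
  unfolding matching_def by (metis length_sorted_list_of_set map_snd_zip set_map set_sorted_list_of_set)

lemma card_matching: "card A = card B \<Longrightarrow> card (matching A B) = card A"
  unfolding matching_def by (simp add: distinct_card distinct_zipI1)

lemma finite_matching: "finite (matching A B)"
  by (simp add: matching_def)

lemma subset_matching:
  assumes "card A = card B" "G \<subseteq> matching A B"
  shows "card (fst ` G) = card (snd ` G) \<and> G = matching (fst ` G) (snd ` G)"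
proof -
  define xs where "xs = sorted_list_of_set A"
  define ys where "ys = sorted_list_of_set B"
  define zs where "zs = filter (\<lambda>p. p \<in> G) (zip xs ys)"
  have set_zs: "set zs = G" using assms(2) by (auto simp: zs_def matching_def xs_def ys_def)
  have "length xs = length ys" using assms(1) by (simp add: xs_def ys_def)
  moreover have "sorted_wrt (<) xs" "sorted_wrt (<) ys"
    by (simp_all add: xs_def ys_def)
  ultimately have "sorted_wrt (\<lambda>p q. fst p < fst q) (zip xs ys)"
    "sorted_wrt (\<lambda>p q. snd p < snd q) (zip xs ys)"
    by (metis map_fst_zip map_snd_zip sorted_wrt_map)+
  then have "sorted_wrt (<) (map fst zs)" "sorted_wrt (<) (map snd zs)"
    unfolding zs_def sorted_wrt_map by (simp_all add: sorted_wrt_filter)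
  then have fst_zs: "sorted_list_of_set (fst ` G) = map fst zs"
    and snd_zs: "sorted_list_of_set (snd ` G) = map snd zs"
    using set_zs by (metis list.set_map sorted_list_of_set.idem_if_sorted_distinct strict_sorted_iff)+
  have "card (fst ` G) = card (snd ` G)"
    using fst_zs snd_zs set_zs by (metis finite_set finite_imageI length_map length_sorted_list_of_set)
  moreover have "G = matching (fst ` G) (snd ` G)"
    unfolding matching_def fst_zs snd_zs zip_map_fst_snd set_zs ..
  ultimately show ?thesis by blast
qed

lemma simplicial_complex_hadamard_complex:
  assumes K: "simplicial_complex K" and L: "simplicial_complex L"
  shows "simplicial_complex (hadamard_complex K L)"
  unfolding simplicial_complex_def
proof (intro conjI ballI allI impI)
  have "hadamard_complex K L \<subseteq> (\<lambda>(A, B). matching A B) ` (K \<times> L)"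
    unfolding hadamard_complex_def by auto
  then show "finite (hadamard_complex K L)"
    using K L by (meson finite_SigmaI finite_imageI finite_subset simplicial_complex_def)
  have "{} \<in> K" "{} \<in> L" "matching {} {} = {}"
    using K L by (auto simp: simplicial_complex_def matching_def)
  then show "{} \<in> hadamard_complex K L"
    unfolding hadamard_complex_def by fastforce
  fix F assume "F \<in> hadamard_complex K L"
  then obtain A B where AB: "A \<in> K" "B \<in> L" "card A = card B" "F = matching A B"
    unfolding hadamard_complex_def by auto
  then show "finite F" by (simp add: finite_matching)
  fix G assume G: "G \<subseteq> F"
  have "finite A" "finite B" using AB K L by (auto simp: simplicial_complex_def)
  then have "fst ` F = A" "snd ` F = B" using AB by (simp_all add: fst_matching snd_matching)
  then have "fst ` G \<subseteq> A" "snd ` G \<subseteq> B" using G by auto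
  then have "fst ` G \<in> K" "snd ` G \<in> L" using AB K L by (auto simp: simplicial_complex_def)
  with subset_matching[OF AB(3) G[unfolded AB(4)]] show "G \<in> hadamard_complex K L"
    unfolding hadamard_complex_def by blast
qed

lemma f_polynomial_hadamard_complex:
  assumes K: "simplicial_complex K" and L: "simplicial_complex L"
  shows "f_polynomial (hadamard_complex K L) = hadamard_poly (f_polynomial K) (f_polynomial L)"
proof (rule poly_eqI)
  fix i
  define Ki where "Ki = {A\<in>K. card A = i}"
  define Li where "Li = {B\<in>L. card B = i}"
  have fin: "\<And>A. A \<in> K \<Longrightarrow> finite A" "\<And>B. B \<in> L \<Longrightarrow> finite B"
    using K L by (auto simp: simplicial_complex_def)
  have "inj_on (\<lambda>(A, B). matching A B) (Ki \<times> Li)"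
    by (rule inj_on_inverseI[where g = "\<lambda>F. (fst ` F, snd ` F)"])
      (clarsimp simp: Ki_def Li_def fin fst_matching snd_matching)
  moreover have "{F\<in>hadamard_complex K L. card F = i} = (\<lambda>(A, B). matching A B) ` (Ki \<times> Li)"
    unfolding hadamard_complex_def Ki_def Li_def by (force simp: card_matching)
  ultimately have "card {F\<in>hadamard_complex K L. card F = i} = card Ki * card Li"
    by (simp add: card_image card_cartesian_product)
  moreover have "finite (hadamard_complex K L)" "finite K" "finite L"
    using simplicial_complex_hadamard_complex[OF K L] K L by (auto simp: simplicial_complex_def)
  ultimately show "coeff (f_polynomial (hadamard_complex K L)) i
      = coeff (hadamard_poly (f_polynomial K) (f_polynomial L)) i"
    by (simp add: coeff_f_polynomial coeff_hadamard_poly flip: Ki_def Li_def)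
qed

theorem proposition4p3:
  fixes f g :: "int poly"
  assumes "is_f_polynomial f" and "is_f_polynomial g"
  shows "is_f_polynomial (f * g) \<and> is_f_polynomial (hadamard_poly f g)"
proof -
  obtain K :: "nat set set" where K: "simplicial_complex K" "f_polynomial K = f"
    using assms(1) unfolding is_f_polynomial_def by blast
  obtain L :: "nat set set" where L: "simplicial_complex L" "f_polynomial L = g"
    using assms(2) unfolding is_f_polynomial_def by blast
  have "is_f_polynomial (f_polynomial (join K L))"
    "is_f_polynomial (f_polynomial (hadamard_complex K L))"
    using K(1) L(1) simplicial_complex_join simplicial_complex_hadamard_complex
    by (blast intro: is_f_polynomial_f_polynomial)+
  then show ?thesis
    using K L f_polynomial_join f_polynomial_hadamard_complex by metis
qed

end
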